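(* Let $\mathbb{F}\subset\mathbb{K}$ be fields of characteristic zero and let $a\colon\mathbb{F}\to\mathbb{K}$ be an additive mapping such that \[ 2a(x^{6})-9x^{2}a(x^{4})-4x^{3}a(x^{3})+36x^{4}a(x^{2})-36x^{5}a(x)=0\qquad(x\in\mathbb{F}). \] Then $a$ is a derivation of order $3$.
   Context: Derivations of higher order: the identically zero map is the only derivation of order $0$; for $m\ge1$, an additive map $d\colon\mathbb{F}\to\mathbb{K}$ is a derivation of order $m$ if there is a map $B\colon\mathbb{F}\times\mathbb{F}\to\mathbb{K}$ which is a derivation of order $m-1$ in each variable such that $d(xy)-xd(y)-d(x)y=B(x,y)$ for all $x,y\in\mathbb{F}$. *)

theory Defs
  imports Main
begin

text \<open>A subfield F of the ambient field 'a (the field K).\<close>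
definition is_subfield :: "'a::field set \<Rightarrow> bool" where
  "is_subfield F \<longleftrightarrow> 0 \<in> F \<and> 1 \<in> F \<and>
     (\<forall>x\<in>F. \<forall>y\<in>F. x + y \<in> F \<and> x * y \<in> F) \<and>
     (\<forall>x\<in>F. - x \<in> F) \<and> (\<forall>x\<in>F. x \<noteq> 0 \<longrightarrow> inverse x \<in> F)"

definition additive_on :: "'a::field set \<Rightarrow> ('a \<Rightarrow> 'a) \<Rightarrow> bool" where
  "additive_on F d \<longleftrightarrow> (\<forall>x\<in>F. \<forall>y\<in>F. d (x + y) = d x + d y)"

fun derivation_of_order :: "'a::field set \<Rightarrow> nat \<Rightarrow> ('a \<Rightarrow> 'a) \<Rightarrow> bool" where
  "derivation_of_order F 0 d = (\<forall>x\<in>F. d x = 0)"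
| "derivation_of_order F (Suc m) d =
     (additive_on F d \<and>
      (\<exists>B :: 'a \<Rightarrow> 'a \<Rightarrow> 'a.
         (\<forall>y\<in>F. derivation_of_order F m (\<lambda>x. B x y)) \<and>
         (\<forall>x\<in>F. derivation_of_order F m (\<lambda>y. B x y)) \<and>
         (\<forall>x\<in>F. \<forall>y\<in>F. d (x * y) - x * d y - d x * y = B x y)))"

end

theory Submission
  imports Defs
begin

text \<open>
  Write \<open>D\<^sub>y f x = f (x y) - x f y - f x y\<close>; then \<open>f\<close> is a derivation of order \<open>m\<close> as soon
  as it is additive and all iterated defects \<open>D\<^sub>y\<^sub>m \<dots> D\<^sub>y\<^sub>1 f\<close> vanish. For \<open>m = 3\<close> the
  map \<open>(x, y, z, w) \<mapsto> D\<^sub>w D\<^sub>z D\<^sub>y a x\<close> is symmetric and additive in each variable, so by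
  polarization it vanishes once its diagonal
  \<open>a(x\<^sup>4) - 4 x a(x\<^sup>3) + 6 x\<^sup>2 a(x\<^sup>2) - 4 x\<^sup>3 a(x)\<close> does. The diagonal is obtained from the
  sextic equation by substituting \<open>x + n\<close> for \<open>x\<close>: by additivity, and since \<open>a 1 = 0\<close>, the
  result is a quadratic polynomial in \<open>n\<close> with leading coefficient \<open>21\<close> times the diagonal, so
  the second difference in \<open>n\<close> isolates it.
\<close>

definition leibniz_defect :: "('a::comm_ring \<Rightarrow> 'a) \<Rightarrow> 'a \<Rightarrow> 'a \<Rightarrow> 'a" where
  "leibniz_defect f y x = f (x * y) - x * f y - f x * y"

lemma leibniz_defect_commute: "leibniz_defect f y x = leibniz_defect f x y"
  unfolding leibniz_defect_def by (simp add: ac_simps)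

lemma derivation_of_order_SucI:
  assumes "additive_on F f" and "\<forall>y\<in>F. derivation_of_order F m (leibniz_defect f y)"
  shows "derivation_of_order F (Suc m) f"
proof -
  have "(\<lambda>y. leibniz_defect f y x) = leibniz_defect f x" for x
    using leibniz_defect_commute by blast
  with assms show ?thesis
    by (auto intro!: exI[of _ "\<lambda>x y. leibniz_defect f y x"] simp: leibniz_defect_def)
qed

locale subfield =
  fixes F :: "'a::field set"
  assumes is_subfield: "is_subfield F"
begin

lemma closed [simp]:
  "x \<in> F \<Longrightarrow> y \<in> F \<Longrightarrow> x + y \<in> F"
  "x \<in> F \<Longrightarrow> y \<in> F \<Longrightarrow> x * y \<in> F"
  "x \<in> F \<Longrightarrow> - x \<in> F"
  "0 \<in> F" "1 \<in> F"
  using is_subfield unfolding is_subfield_def by auto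

lemma closed_power [simp]: "x \<in> F \<Longrightarrow> x ^ n \<in> F"
  by (induction n) auto

lemma closed_of_nat [simp]: "of_nat n \<in> F"
  by (induction n) auto

lemma closed_numeral [simp]: "numeral k \<in> F"
  using closed_of_nat[of "numeral k"] by simp

lemma additive_on_leibniz_defect:
  assumes "additive_on F f" and "y \<in> F"
  shows "additive_on F (leibniz_defect f y)"
  using assms unfolding additive_on_def leibniz_defect_def by (simp add: algebra_simps)

lemma derivation_of_order_if_iterated_defects_vanish:
  assumes "additive_on F f"
    and "\<And>ys x. set ys \<subseteq> F \<Longrightarrow> length ys = m \<Longrightarrow> x \<in> F \<Longrightarrow>
           fold (\<lambda>y g. leibniz_defect g y) ys f x = 0"
  shows "derivation_of_order F m f"
  using assms
proof (induction m arbitrary: f)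
  case 0
  then show ?case using "0.prems"(2)[of "[]"] by simp
next
  case (Suc m)
  have "derivation_of_order F m (leibniz_defect f y)" if "y \<in> F" for y
  proof (rule Suc.IH)
    show "additive_on F (leibniz_defect f y)"
      using additive_on_leibniz_defect[OF Suc.prems(1) that] .
    show "fold (\<lambda>y g. leibniz_defect g y) ys (leibniz_defect f y) x = 0"
      if "set ys \<subseteq> F" "length ys = m" "x \<in> F" for ys x
      using Suc.prems(2)[of "y # ys" x] that \<open>y \<in> F\<close> by simp
  qed
  then show ?case
    using derivation_of_order_SucI[OF Suc.prems(1)] by blast
qed

end

definition sextic_defect :: "('a::field \<Rightarrow> 'a) \<Rightarrow> 'a \<Rightarrow> 'a" where
  "sextic_defect a x = 2 * a (x ^ 6) - 9 * x ^ 2 * a (x ^ 4) - 4 * x ^ 3 * a (x ^ 3)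
     + 36 * x ^ 4 * a (x ^ 2) - 36 * x ^ 5 * a x"

definition quartic_defect :: "('a::field \<Rightarrow> 'a) \<Rightarrow> 'a \<Rightarrow> 'a" where
  "quartic_defect a x = a (x ^ 4) - 4 * x * a (x ^ 3) + 6 * x ^ 2 * a (x ^ 2) - 4 * x ^ 3 * a x"

locale additive_map = subfield F for F :: "'a::field set" +
  fixes a :: "'a \<Rightarrow> 'a"
  assumes additive: "additive_on F a"
begin

lemma map_add [simp]: "x \<in> F \<Longrightarrow> y \<in> F \<Longrightarrow> a (x + y) = a x + a y"
  using additive unfolding additive_on_def by auto

lemma map_0 [simp]: "a 0 = 0"
  using map_add[of 0 0] by (metis add_cancel_right_right closed(4))

lemma closed_sum: "(\<And>i. i \<in> I \<Longrightarrow> f i \<in> F) \<Longrightarrow> (\<Sum>i\<in>I. f i) \<in> F"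
  by (induction I rule: infinite_finite_induct) auto

lemma map_sum: "(\<And>i. i \<in> I \<Longrightarrow> f i \<in> F) \<Longrightarrow> a (\<Sum>i\<in>I. f i) = (\<Sum>i\<in>I. a (f i))"
  by (induction I rule: infinite_finite_induct) (auto simp: closed_sum)

lemma map_of_nat_mult: "x \<in> F \<Longrightarrow> a (of_nat n * x) = of_nat n * a x"
  by (induction n) (auto simp: distrib_right)

lemma map_shifted_power:
  assumes "x \<in> F"
  shows "a ((x + of_nat n) ^ k) = (\<Sum>i\<le>k. of_nat ((k choose i) * n ^ (k - i)) * a (x ^ i))"
proof -
  have "(x + of_nat n) ^ k = (\<Sum>i\<le>k. of_nat ((k choose i) * n ^ (k - i)) * x ^ i)"
    unfolding binomial_ring by (simp add: ac_simps)
  then show ?thesis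
    using assms by (simp add: map_sum map_of_nat_mult del: of_nat_mult of_nat_power)
qed

lemma sextic_defect_second_difference:
  assumes "x \<in> F" and "a 1 = 0"
  shows "sextic_defect a (x + 2) - 2 * sextic_defect a (x + 1) + sextic_defect a x
    = 42 * quartic_defect a x"
proof -
  define y z where "y = x + 1" and "z = x + 2"
  from map_shifted_power[OF assms(1), of 1] map_shifted_power[OF assms(1), of 2] have
    Ey: "a (y ^ k) = (\<Sum>i\<le>k. of_nat (k choose i) * a (x ^ i))" and
    Ez: "a (z ^ k) = (\<Sum>i\<le>k. of_nat ((k choose i) * 2 ^ (k - i)) * a (x ^ i))" for k
    by (simp_all add: y_def z_def)
  have "a y = a x" "a z = a x"
    using Ey[of 1] Ez[of 1] assms(2) by simp_all
  then show ?thesis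
    unfolding y_def[symmetric] z_def[symmetric] sextic_defect_def quartic_defect_def Ey Ez
    using assms(2) by (simp add: eval_nat_numeral y_def z_def) (simp add: algebra_simps)
qed

end

definition leibniz_defect3 :: "('a::comm_ring \<Rightarrow> 'a) \<Rightarrow> 'a \<Rightarrow> 'a \<Rightarrow> 'a \<Rightarrow> 'a \<Rightarrow> 'a" where
  "leibniz_defect3 f x y z w = leibniz_defect (leibniz_defect (leibniz_defect f y) z) w x"

lemma leibniz_defect3_commute:
  "leibniz_defect3 f x y z w = leibniz_defect3 f y x z w"
  "leibniz_defect3 f x y z w = leibniz_defect3 f x z y w"
  "leibniz_defect3 f x y z w = leibniz_defect3 f x y w z"
  unfolding leibniz_defect3_def leibniz_defect_def by (simp_all add: algebra_simps)

lemma leibniz_defect3_diagonal: "leibniz_defect3 f x x x x = quartic_defect f x"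
  unfolding leibniz_defect3_def leibniz_defect_def quartic_defect_def
  by (simp add: eval_nat_numeral algebra_simps)

locale symmetric_quadriadditive =
  fixes G :: "'a::ab_group_add set" and P :: "'a \<Rightarrow> 'a \<Rightarrow> 'a \<Rightarrow> 'a \<Rightarrow> 'b::{idom, ring_char_0}"
  assumes add_closed: "x \<in> G \<Longrightarrow> y \<in> G \<Longrightarrow> x + y \<in> G"
    and uminus_closed: "x \<in> G \<Longrightarrow> - x \<in> G"
    and commute12: "P x y z w = P y x z w"
    and commute23: "P x y z w = P x z y w"
    and commute34: "P x y z w = P x y w z"
    and additive1: "\<lbrakk>x \<in> G; x' \<in> G; y \<in> G; z \<in> G; w \<in> G\<rbrakk> \<Longrightarrow>
      P (x + x') y z w = P x y z w + P x' y z w"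
begin

lemma diff_closed: "x \<in> G \<Longrightarrow> y \<in> G \<Longrightarrow> x - y \<in> G"
  by (metis add_closed uminus_closed diff_conv_add_uminus)

lemma additive2:
  "\<lbrakk>x \<in> G; x' \<in> G; y \<in> G; z \<in> G; w \<in> G\<rbrakk> \<Longrightarrow> P y (x + x') z w = P y x z w + P y x' z w"
  by (metis additive1 commute12)

lemma additive3:
  "\<lbrakk>x \<in> G; x' \<in> G; y \<in> G; z \<in> G; w \<in> G\<rbrakk> \<Longrightarrow> P y z (x + x') w = P y z x w + P y z x' w"
  by (metis additive2 commute23)

lemma additive4:
  "\<lbrakk>x \<in> G; x' \<in> G; y \<in> G; z \<in> G; w \<in> G\<rbrakk> \<Longrightarrow> P y z w (x + x') = P y z w x + P y z w x'"
  by (metis additive3 commute34)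

lemmas additive = additive1 additive2 additive3 additive4

lemma subtractive:
  "\<lbrakk>x \<in> G; x' \<in> G; y \<in> G; z \<in> G; w \<in> G\<rbrakk> \<Longrightarrow> P (x - x') y z w = P x y z w - P x' y z w"
  "\<lbrakk>x \<in> G; x' \<in> G; y \<in> G; z \<in> G; w \<in> G\<rbrakk> \<Longrightarrow> P y (x - x') z w = P y x z w - P y x' z w"
  "\<lbrakk>x \<in> G; x' \<in> G; y \<in> G; z \<in> G; w \<in> G\<rbrakk> \<Longrightarrow> P y z (x - x') w = P y z x w - P y z x' w"
  "\<lbrakk>x \<in> G; x' \<in> G; y \<in> G; z \<in> G; w \<in> G\<rbrakk> \<Longrightarrow> P y z w (x - x') = P y z w x - P y z w x'"
  using additive[of "x - x'" x'] by (simp_all add: diff_closed eq_diff_eq)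

lemma eq_0_if_diagonal_eq_0:
  assumes diagonal: "\<And>u. u \<in> G \<Longrightarrow> P u u u u = 0"
    and "x \<in> G" "y \<in> G" "z \<in> G" "w \<in> G"
  shows "P x y z w = 0"
proof -
  have double: "P u u v v = 0" if "u \<in> G" "v \<in> G" for u v
  proof -
    have "12 * P u u v v = P (u + v) (u + v) (u + v) (u + v) + P (u - v) (u - v) (u - v) (u - v)
        - 2 * P u u u u - 2 * P v v v v"
      using that
      by (simp only: additive subtractive add_closed diff_closed
          commute12[of v u] commute23[of _ v u] commute34[of _ _ v u]) (simp add: algebra_simps)
    also have "\<dots> = 0"
      using that by (simp add: diagonal add_closed diff_closed)
    finally show ?thesis by simp
  qed
  have mixed: "P u u' v v = 0" if "u \<in> G" "u' \<in> G" "v \<in> G" for u u' v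
  proof -
    have "2 * P u u' v v = P (u + u') (u + u') v v - P u u v v - P u' u' v v"
      using that by (simp only: additive add_closed commute12[of u' u]) (simp add: algebra_simps)
    also have "\<dots> = 0"
      using that by (simp add: double add_closed)
    finally show ?thesis by simp
  qed
  have "2 * P x y z w = P x y (z + w) (z + w) - P x y z z - P x y w w"
    using assms(2-5) by (simp only: additive add_closed commute34[of _ _ w z]) (simp add: algebra_simps)
  also have "\<dots> = 0"
    using assms(2-5) add_closed mixed[of x y] by simp
  finally have "2 * P x y z w = 0" .
  then show ?thesis by simp
qed

end

locale sextic_solution = additive_map F a for F :: "'a::field_char_0 set" and a +
  assumes sextic_equation: "x \<in> F \<Longrightarrow> sextic_defect a x = 0"
begin

lemma map_1_eq_0: "a 1 = 0"
  using sextic_equation[of 1] by (simp add: sextic_defect_def)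

lemma quartic_defect_eq_0: "x \<in> F \<Longrightarrow> quartic_defect a x = 0"
  using sextic_defect_second_difference[OF _ map_1_eq_0, of x] by (simp add: sextic_equation)

lemma leibniz_defect3_eq_0:
  assumes "x \<in> F" "y \<in> F" "z \<in> F" "w \<in> F"
  shows "leibniz_defect3 a x y z w = 0"
proof -
  interpret symmetric_quadriadditive F "leibniz_defect3 a"
  proof
    fix x x' y z w assume "x \<in> F" "x' \<in> F" "y \<in> F" "z \<in> F" "w \<in> F"
    then have "additive_on F (leibniz_defect (leibniz_defect (leibniz_defect a y) z) w)"
      by (intro additive_on_leibniz_defect additive)
    then show "leibniz_defect3 a (x + x') y z w = leibniz_defect3 a x y z w + leibniz_defect3 a x' y z w"
      using \<open>x \<in> F\<close> \<open>x' \<in> F\<close> by (simp add: leibniz_defect3_def additive_on_def)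
  qed (simp_all add: leibniz_defect3_commute[symmetric])
  show ?thesis
    using eq_0_if_diagonal_eq_0 assms by (simp add: leibniz_defect3_diagonal quartic_defect_eq_0)
qed

end

theorem mainTheorem3:
  fixes F :: "'a::field_char_0 set" and a :: "'a \<Rightarrow> 'a"
  assumes "is_subfield F"
    and "additive_on F a"
    and "\<forall>x\<in>F. 2 * a (x ^ 6) - 9 * x ^ 2 * a (x ^ 4) - 4 * x ^ 3 * a (x ^ 3)
                 + 36 * x ^ 4 * a (x ^ 2) - 36 * x ^ 5 * a x = 0"
  shows "derivation_of_order F 3 a"
proof -
  interpret sextic_solution F a
    using assms by unfold_locales (simp_all add: sextic_defect_def)
  show ?thesis
  proof (rule derivation_of_order_if_iterated_defects_vanish[OF additive])
    fix ys x assume "set ys \<subseteq> F" "length ys = 3" "x \<in> F"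
    then obtain y z w where "ys = [y, z, w]" "y \<in> F" "z \<in> F" "w \<in> F"
      by (auto simp: numeral_3_eq_3 length_Suc_conv)
    then show "fold (\<lambda>y g. leibniz_defect g y) ys a x = 0"
      using leibniz_defect3_eq_0[OF \<open>x \<in> F\<close>] by (simp add: leibniz_defect3_def)
  qed
qed

end
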